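(* Let $G=(V,E)$ be a control flow graph and $p$ a predicate node. If $p$ has at most one successor in $A_p$, then there are no nodes $a,b$ that are DOD on $p$.
   Context: A control flow graph (CFG) is a finite directed graph $G=(V,E)$ in which every node has at most two outgoing edges; nodes with exactly two outgoing edges are predicate nodes. A path from $n_1$ is a nonempty finite or infinite sequence $n_1n_2\ldots$ of nodes with each adjacent pair an edge; it is maximal if it is infinite or its last node has no successor. $V_p$ is the set of nodes occurring on all maximal paths from $p$ in $G$. For $V'\subseteq V$, a $V'$-interval from $x$ to $y$ is a finite path $n_1\ldots n_k$ in $G$ with $k\ge 2$, $n_1=x\in V'$, $n_k=y\in V'$, and $n_i\notin V'$ for $1<i<k$. $A_p$ is the directed graph with node set $V_p$ and an edge $(x,y)$ iff there is a $V_p$-interval from $x$ to $y$ in $G$. For three distinct nodes $p,a,b$ with $p$ a predicate node with successors $s_1,s_2$, the nodes $a,b$ are DOD (decisive order-dependent) on $p$ if all maximal paths from $p$ contain both $a$ and $b$, all maximal paths from $s_1$ contain $a$ before any occurrence of $b$, and all maximal paths from $s_2$ contain $b$ before any occurrence of $a$. *)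

theory Defs
  imports Main
begin

definition succs :: "('v \<times> 'v) set \<Rightarrow> 'v \<Rightarrow> 'v set" where
  "succs E n = {m. (n, m) \<in> E}"

definition cfg :: "'v set \<Rightarrow> ('v \<times> 'v) set \<Rightarrow> bool" where
  "cfg V E \<longleftrightarrow> finite V \<and> E \<subseteq> V \<times> V \<and> (\<forall>n\<in>V. card (succs E n) \<le> 2)"

definition predicate_node :: "'v set \<Rightarrow> ('v \<times> 'v) set \<Rightarrow> 'v \<Rightarrow> bool" where
  "predicate_node V E p \<longleftrightarrow> p \<in> V \<and> card (succs E p) = 2"

definition fpath :: "'v set \<Rightarrow> ('v \<times> 'v) set \<Rightarrow> 'v list \<Rightarrow> bool" where
  "fpath V E xs \<longleftrightarrow> xs \<noteq> [] \<and> set xs \<subseteq> V \<and>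
     (\<forall>i. Suc i < length xs \<longrightarrow> (xs ! i, xs ! Suc i) \<in> E)"

definition ipath :: "'v set \<Rightarrow> ('v \<times> 'v) set \<Rightarrow> (nat \<Rightarrow> 'v) \<Rightarrow> bool" where
  "ipath V E f \<longleftrightarrow> (\<forall>i. f i \<in> V \<and> (f i, f (Suc i)) \<in> E)"

definition max_fpath :: "'v set \<Rightarrow> ('v \<times> 'v) set \<Rightarrow> 'v \<Rightarrow> 'v list \<Rightarrow> bool" where
  "max_fpath V E n xs \<longleftrightarrow> fpath V E xs \<and> hd xs = n \<and> succs E (last xs) = {}"

definition max_ipath :: "'v set \<Rightarrow> ('v \<times> 'v) set \<Rightarrow> 'v \<Rightarrow> (nat \<Rightarrow> 'v) \<Rightarrow> bool" where
  "max_ipath V E n f \<longleftrightarrow> ipath V E f \<and> f 0 = n"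

definition on_all_max_paths :: "'v set \<Rightarrow> ('v \<times> 'v) set \<Rightarrow> 'v \<Rightarrow> 'v \<Rightarrow> bool" where
  "on_all_max_paths V E n x \<longleftrightarrow>
     (\<forall>xs. max_fpath V E n xs \<longrightarrow> x \<in> set xs) \<and>
     (\<forall>f. max_ipath V E n f \<longrightarrow> x \<in> range f)"

definition Vp :: "'v set \<Rightarrow> ('v \<times> 'v) set \<Rightarrow> 'v \<Rightarrow> 'v set" where
  "Vp V E p = {x \<in> V. on_all_max_paths V E p x}"

definition interval :: "'v set \<Rightarrow> ('v \<times> 'v) set \<Rightarrow> 'v set \<Rightarrow> 'v \<Rightarrow> 'v \<Rightarrow> 'v list \<Rightarrow> bool" where
  "interval V E V' x y xs \<longleftrightarrow> fpath V E xs \<and> length xs \<ge> 2 \<and>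
     hd xs = x \<and> last xs = y \<and> x \<in> V' \<and> y \<in> V' \<and>
     (\<forall>i. 0 < i \<and> i < length xs - 1 \<longrightarrow> xs ! i \<notin> V')"

(* edge set of A_p (its node set is Vp V E p) *)
definition Ap_edges :: "'v set \<Rightarrow> ('v \<times> 'v) set \<Rightarrow> 'v \<Rightarrow> ('v \<times> 'v) set" where
  "Ap_edges V E p = {(x, y). x \<in> Vp V E p \<and> y \<in> Vp V E p \<and>
     (\<exists>xs. interval V E (Vp V E p) x y xs)}"

definition a_before_b :: "'v set \<Rightarrow> ('v \<times> 'v) set \<Rightarrow> 'v \<Rightarrow> 'v \<Rightarrow> 'v \<Rightarrow> bool" where
  "a_before_b V E n a b \<longleftrightarrow>
     (\<forall>xs. max_fpath V E n xs \<longrightarrow>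
        (\<exists>i < length xs. xs ! i = a \<and> (\<forall>j\<le>i. xs ! j \<noteq> b))) \<and>
     (\<forall>f. max_ipath V E n f \<longrightarrow>
        (\<exists>i. f i = a \<and> (\<forall>j\<le>i. f j \<noteq> b)))"

definition DOD :: "'v set \<Rightarrow> ('v \<times> 'v) set \<Rightarrow> 'v \<Rightarrow> 'v \<Rightarrow> 'v \<Rightarrow> bool" where
  "DOD V E p a b \<longleftrightarrow> p \<noteq> a \<and> p \<noteq> b \<and> a \<noteq> b \<and> predicate_node V E p \<and>
     on_all_max_paths V E p a \<and> on_all_max_paths V E p b \<and>
     (\<exists>s1 s2. s1 \<noteq> s2 \<and> succs E p = {s1, s2} \<and>
        a_before_b V E s1 a b \<and> a_before_b V E s2 b a)"

end

(* For a successor s of p, follow a path from s to a node a that lies on every maximal path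
   from p (hence from s, if a \<noteq> p). Its first node y in V_p is an A_p-successor of p, and the
   segment from s to y avoids V_p. Prepending that segment turns maximal paths from y into maximal
   paths from s, so an order of a and b enforced from s is also enforced from y. If p has only one
   A_p-successor, both successors s1, s2 of a DOD pair lead to the same y, from which a must
   precede b and b precede a on the same maximal path. *)

theory Submission
  imports Defs "HOL-Library.Omega_Words_Fun"
begin

lemma fpath_Cons:
  "fpath V E (x # xs) \<longleftrightarrow> x \<in> V \<and> (xs = [] \<or> (x, hd xs) \<in> E \<and> fpath V E xs)"
  unfolding fpath_def by (cases xs) (auto simp: nth_Cons split: nat.splits)

lemma fpath_append_Cons:
  assumes "fpath V E (ys @ [y])" and "fpath V E (y # zs)"
  shows "fpath V E (ys @ y # zs)"
  using assms by (induction ys) (auto simp: fpath_Cons hd_append)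

lemma fpath_prefix:
  assumes "fpath V E (xs @ ys)" and "xs \<noteq> []"
  shows "fpath V E xs"
proof -
  have "(xs ! i, xs ! Suc i) \<in> E" if "Suc i < length xs" for i
    using assms(1) that unfolding fpath_def by (auto simp: nth_append dest!: spec[of _ i])
  then show ?thesis using assms unfolding fpath_def by auto
qed

lemma fpath_map_upt:
  assumes "ipath V E f"
  shows "fpath V E (map f [0..<Suc i])"
  using assms unfolding fpath_def ipath_def by (auto simp del: upt_Suc)

lemma ipath_build:
  "ipath V E (x ## f) \<longleftrightarrow> x \<in> V \<and> (x, f 0) \<in> E \<and> ipath V E f"
  unfolding ipath_def by (metis build.simps not0_implies_Suc)

lemma conc_0: "(ys \<frown> f) 0 = hd (ys @ [f 0])"
  by (cases ys) auto

lemma ipath_conc: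
  assumes "fpath V E (ys @ [f 0])" and "ipath V E f"
  shows "ipath V E (ys \<frown> f)"
  using assms by (induction ys) (auto simp: fpath_Cons ipath_build conc_0 hd_append)

lemma max_fpath_prepend:
  assumes "fpath V E (ys @ [y])" and "max_fpath V E y zs"
  shows "max_fpath V E (hd (ys @ [y])) (ys @ zs)"
proof -
  obtain zs' where "zs = y # zs'"
    using assms(2) unfolding max_fpath_def fpath_def by (cases zs) auto
  then show ?thesis
    using assms fpath_append_Cons unfolding max_fpath_def by (fastforce simp: hd_append)
qed

lemma max_ipath_prepend:
  assumes "fpath V E (ys @ [y])" and "max_ipath V E y f"
  shows "max_ipath V E (hd (ys @ [y])) (ys \<frown> f)"
  using assms ipath_conc[of V E ys f] unfolding max_ipath_def by (auto simp: conc_0)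

lemma max_path_exists:
  assumes EV: "E \<subseteq> V \<times> V" and nV: "n \<in> V"
  shows "(\<exists>xs. max_fpath V E n xs) \<or> (\<exists>f. max_ipath V E n f)"
proof (cases "\<exists>xs. max_fpath V E n xs")
  case no_fpath: False
  define R where "R = {m \<in> V. \<nexists>xs. max_fpath V E m xs}"
  have step: "\<exists>m'. m' \<in> R \<and> (m, m') \<in> E" if "m \<in> R" for m
  proof -
    have "m \<in> V" and "\<not> max_fpath V E m [m]" using that unfolding R_def by blast+
    then obtain m' where mm': "(m, m') \<in> E"
      unfolding max_fpath_def succs_def by (auto simp: fpath_def)
    have "\<not> max_fpath V E m' xs" for xs
      using that max_fpath_prepend[of V E "[m]" m' xs] mm' EV
      unfolding R_def by (auto simp: fpath_Cons)
    then show ?thesis using mm' EV unfolding R_def by blast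
  qed
  obtain f where f: "\<forall>k. (f k \<in> R \<and> (k = 0 \<longrightarrow> f k = n)) \<and> (f k, f (Suc k)) \<in> E"
    using dependent_nat_choice[of "\<lambda>k m. m \<in> R \<and> (k = 0 \<longrightarrow> m = n)" "\<lambda>_ m m'. (m, m') \<in> E"]
      step nV no_fpath unfolding R_def by blast
  then have "max_ipath V E n f"
    unfolding max_ipath_def ipath_def R_def by blast
  then show ?thesis by blast
qed simp

lemma Vp_self:
  assumes "p \<in> V"
  shows "p \<in> Vp V E p"
  using assms unfolding Vp_def on_all_max_paths_def max_fpath_def max_ipath_def
  by (auto simp: fpath_def)

lemma on_all_max_paths_imp_Vp:
  assumes "E \<subseteq> V \<times> V" and "p \<in> V" and "on_all_max_paths V E p a"
  shows "a \<in> Vp V E p"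
  using max_path_exists[OF assms(1,2)] assms(3)
  unfolding Vp_def on_all_max_paths_def max_fpath_def max_ipath_def fpath_def ipath_def
  by blast

lemma on_all_max_paths_succ:
  assumes "on_all_max_paths V E p a" and "a \<noteq> p" and "p \<in> V" and "(p, s) \<in> E"
  shows "on_all_max_paths V E s a"
  unfolding on_all_max_paths_def
proof (intro conjI allI impI)
  fix xs assume xs: "max_fpath V E s xs"
  then have "s \<in> V" unfolding max_fpath_def fpath_def by (auto dest: hd_in_set)
  then have "max_fpath V E p (p # xs)"
    using max_fpath_prepend[of V E "[p]" s xs] xs assms(3,4) by (simp add: fpath_Cons)
  then show "a \<in> set xs" using assms(1,2) unfolding on_all_max_paths_def by auto
next
  fix f assume "max_ipath V E s f"
  then have "max_ipath V E p (p ## f)"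
    using assms(3,4) unfolding max_ipath_def by (simp add: ipath_build)
  then have "a \<in> range (p ## f)" using assms(1) unfolding on_all_max_paths_def by blast
  then show "a \<in> range f" using assms(2) by simp
qed

lemma on_all_max_paths_reachable:
  assumes "E \<subseteq> V \<times> V" and "s \<in> V" and "on_all_max_paths V E s a"
  shows "\<exists>xs. fpath V E xs \<and> hd xs = s \<and> last xs = a"
  using max_path_exists[OF assms(1,2)]
proof
  assume "\<exists>xs. max_fpath V E s xs"
  then obtain xs where xs: "max_fpath V E s xs" by blast
  then obtain ys zs where "xs = ys @ a # zs"
    using assms(3) unfolding on_all_max_paths_def by (meson split_list)
  then show ?thesis
    using xs fpath_prefix[of V E "ys @ [a]" zs] unfolding max_fpath_def
    by (intro exI[of _ "ys @ [a]"]) (auto simp: hd_append)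
next
  assume "\<exists>f. max_ipath V E s f"
  then obtain f where f: "max_ipath V E s f" by blast
  then obtain i where "f i = a"
    using assms(3) unfolding on_all_max_paths_def by blast
  then show ?thesis
    using f fpath_map_upt unfolding max_ipath_def
    by (intro exI[of _ "map f [0..<Suc i]"]) (auto simp del: upt_Suc simp: hd_map last_map)
qed

lemma interval_Cons_snoc:
  "interval V E W x y (x # ys @ [y]) \<longleftrightarrow>
     fpath V E (x # ys @ [y]) \<and> x \<in> W \<and> y \<in> W \<and> set ys \<inter> W = {}"
proof -
  have "(\<forall>i. 0 < i \<and> i < length (x # ys @ [y]) - 1 \<longrightarrow> (x # ys @ [y]) ! i \<notin> W)
        \<longleftrightarrow> set ys \<inter> W = {}" (is "?interior \<longleftrightarrow> _")
  proof
    assume ?interior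
    then have "ys ! j \<notin> W" if "j < length ys" for j
      using that spec[OF \<open>?interior\<close>, of "Suc j"] by (simp add: nth_append)
    then show "set ys \<inter> W = {}" by (auto simp: in_set_conv_nth)
  next
    assume "set ys \<inter> W = {}"
    then show ?interior by (auto simp: nth_append nth_Cons split: nat.splits dest: nth_mem)
  qed
  then show ?thesis unfolding interval_def by auto
qed

lemma Ap_edge_through_succ:
  assumes EV: "E \<subseteq> V \<times> V" and pV: "p \<in> V" and ps: "(p, s) \<in> E"
    and a: "on_all_max_paths V E p a" "a \<noteq> p"
  shows "\<exists>y ys. (p, y) \<in> Ap_edges V E p \<and> fpath V E (ys @ [y]) \<and> hd (ys @ [y]) = s
           \<and> set ys \<inter> Vp V E p = {}"
proof -
  have sV: "s \<in> V" using ps EV by blast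
  obtain xs where xs: "fpath V E xs" "hd xs = s" "last xs = a"
    using on_all_max_paths_reachable[OF EV sV on_all_max_paths_succ[OF a pV ps]] by blast
  have "a \<in> Vp V E p" by (rule on_all_max_paths_imp_Vp[OF EV pV a(1)])
  then have reaches_Vp: "\<exists>x \<in> set xs. x \<in> Vp V E p"
    using xs(1,3) last_in_set unfolding fpath_def by metis
  obtain ys y zs where split: "xs = ys @ y # zs" "y \<in> Vp V E p" "\<forall>x \<in> set ys. x \<notin> Vp V E p"
    using split_list_first_prop[OF reaches_Vp] by blast
  have path: "fpath V E (ys @ [y])"
    using fpath_prefix[of V E "ys @ [y]" zs] xs(1) split(1) by simp
  have hd: "hd (ys @ [y]) = s"
    using xs(2) split(1) by (cases ys) auto
  have "fpath V E (p # ys @ [y])"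
    using path hd pV ps by (simp add: fpath_Cons)
  then have "interval V E (Vp V E p) p y (p # ys @ [y])"
    unfolding interval_Cons_snoc using split(2,3) Vp_self[OF pV] by blast
  then have "(p, y) \<in> Ap_edges V E p"
    unfolding Ap_edges_def using Vp_self[OF pV] split(2) by auto
  then show ?thesis using path hd split(3) by blast
qed

lemma first_occurrence_shift:
  fixes g h :: "nat \<Rightarrow> 'a"
  assumes shift: "\<And>j. g (n + j) = h j" and a_not_before: "\<forall>j < n. g j \<noteq> a"
    and "g i = a" and "\<forall>j \<le> i. g j \<noteq> b"
  shows "n \<le> i \<and> h (i - n) = a \<and> (\<forall>j \<le> i - n. h j \<noteq> b)"
proof -
  have "n \<le> i" using assms(3) a_not_before by (metis leI)
  then show ?thesis using assms(3,4) shift[symmetric] by (metis add.commute le_add_diff_inverse2 add_le_mono1)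
qed

lemma a_before_b_along_path:
  assumes path: "fpath V E (ys @ [y])" and a: "a \<notin> set ys"
    and order: "a_before_b V E (hd (ys @ [y])) a b"
  shows "a_before_b V E y a b"
  unfolding a_before_b_def
proof (intro conjI allI impI)
  fix zs assume "max_fpath V E y zs"
  then obtain i where i: "i < length (ys @ zs)" "(ys @ zs) ! i = a" "\<forall>j \<le> i. (ys @ zs) ! j \<noteq> b"
    using order max_fpath_prepend[OF path] unfolding a_before_b_def by blast
  have "\<forall>j < length ys. (ys @ zs) ! j \<noteq> a" using a by (auto simp: nth_append)
  then have "length ys \<le> i \<and> zs ! (i - length ys) = a \<and> (\<forall>j \<le> i - length ys. zs ! j \<noteq> b)"
    using first_occurrence_shift[of "(!) (ys @ zs)" "length ys" "(!) zs"] i(2,3) by simp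
  then show "\<exists>i < length zs. zs ! i = a \<and> (\<forall>j \<le> i. zs ! j \<noteq> b)"
    using i(1) by (intro exI[of _ "i - length ys"]) auto
next
  fix f assume "max_ipath V E y f"
  then obtain i where i: "(ys \<frown> f) i = a" "\<forall>j \<le> i. (ys \<frown> f) j \<noteq> b"
    using order max_ipath_prepend[OF path] unfolding a_before_b_def by blast
  have "\<forall>j < length ys. (ys \<frown> f) j \<noteq> a" using a by auto
  moreover have "(ys \<frown> f) (length ys + j) = f j" for j by simp
  ultimately show "\<exists>i. f i = a \<and> (\<forall>j \<le> i. f j \<noteq> b)"
    using first_occurrence_shift[of "ys \<frown> f" "length ys" f] i by blast
qed

lemma a_before_b_asym:
  assumes "E \<subseteq> V \<times> V" and "y \<in> V" and "a_before_b V E y a b"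
  shows "\<not> a_before_b V E y b a"
proof
  assume ba: "a_before_b V E y b a"
  have no_conflict: False if "g i = a" "\<forall>k \<le> i. g k \<noteq> b" "g j = b" "\<forall>k \<le> j. g k \<noteq> a"
    for g :: "nat \<Rightarrow> 'a" and i j
    using that by (cases "i \<le> j") auto
  from max_path_exists[OF assms(1,2)] show False
  proof
    assume "\<exists>zs. max_fpath V E y zs"
    then obtain zs where "max_fpath V E y zs" by blast
    then show False
      using assms(3) ba no_conflict[of "(!) zs"] unfolding a_before_b_def by metis
  next
    assume "\<exists>f. max_ipath V E y f"
    then obtain f where "max_ipath V E y f" by blast
    then show False
      using assms(3) ba no_conflict[of f] unfolding a_before_b_def by metis
  qed
qed

lemma a_before_b_at_Ap_successor:
  assumes EV: "E \<subseteq> V \<times> V" and pV: "p \<in> V" and ps: "(p, s) \<in> E"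
    and a: "on_all_max_paths V E p a" "a \<noteq> p" and order: "a_before_b V E s a b"
  shows "\<exists>y. (p, y) \<in> Ap_edges V E p \<and> a_before_b V E y a b"
proof -
  obtain y ys where y: "(p, y) \<in> Ap_edges V E p" "fpath V E (ys @ [y])"
      "hd (ys @ [y]) = s" "set ys \<inter> Vp V E p = {}"
    using Ap_edge_through_succ[OF EV pV ps a] by blast
  moreover have "a \<notin> set ys"
    using on_all_max_paths_imp_Vp[OF EV pV a(1)] y(4) by blast
  ultimately show ?thesis using a_before_b_along_path order by metis
qed

theorem lemma4p5:
  fixes V :: "'v set" and E :: "('v \<times> 'v) set" and p :: 'v
  assumes "cfg V E"
    and "predicate_node V E p"
    and "card {y. (p, y) \<in> Ap_edges V E p} \<le> 1"
  shows "\<not> (\<exists>a b. DOD V E p a b)"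
proof
  assume "\<exists>a b. DOD V E p a b"
  then obtain a b s1 s2 where "succs E p = {s1, s2}" and ab: "a \<noteq> p" "b \<noteq> p"
    and all: "on_all_max_paths V E p a" "on_all_max_paths V E p b"
    and order: "a_before_b V E s1 a b" "a_before_b V E s2 b a"
    unfolding DOD_def by metis
  then have ps: "(p, s1) \<in> E" "(p, s2) \<in> E" unfolding succs_def by auto
  have EV: "E \<subseteq> V \<times> V" and "finite V" and pV: "p \<in> V"
    using assms(1,2) unfolding cfg_def predicate_node_def by auto
  obtain y1 y2 where y1: "(p, y1) \<in> Ap_edges V E p" "a_before_b V E y1 a b"
    and y2: "(p, y2) \<in> Ap_edges V E p" "a_before_b V E y2 b a"
    using a_before_b_at_Ap_successor[OF EV pV ps(1) all(1) ab(1) order(1)]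
      a_before_b_at_Ap_successor[OF EV pV ps(2) all(2) ab(2) order(2)] by blast
  have "finite {y. (p, y) \<in> Ap_edges V E p}"
    using \<open>finite V\<close> by (rule finite_subset[rotated]) (auto simp: Ap_edges_def Vp_def)
  then have "y1 = y2" using assms(3) y1(1) y2(1) by (auto simp: card_le_Suc0_iff_eq)
  moreover have "y1 \<in> V" using y1(1) unfolding Ap_edges_def Vp_def by blast
  ultimately show False using a_before_b_asym[OF EV _ y1(2)] y2(2) by blast
qed

end
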